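(* The functor $\widetilde S:\mathbf{Gpd}\to(q\mathbf{ASmd})_0$ is fully faithful; that is, for groupoids $\mathcal K,\mathcal H$ the map $F\mapsto\widetilde S(F)$ is a bijection from the set of functors $\mathcal K\to\mathcal H$ onto the set of morphisms of quasi-schemoids $\widetilde S(\mathcal K)\to\widetilde S(\mathcal H)$ that send base points to base points.
   Context: Write $s(f),t(f)$ for source and target. A quasi-schemoid is a pair $(\mathcal C,S)$ with $\mathcal C$ a small category and $S$ a partition of $mor(\mathcal C)$ into nonempty blocks such that for all $\sigma,\tau,\mu\in S$ and $f,g\in\mu$ the sets $\{(a,b)\in\sigma\times\tau: s(a)=t(b), a\circ b=f\}$ and the analogous set for $g$ have equal cardinality. A morphism of quasi-schemoids $F:(\mathcal C,S)\to(\mathcal E,S')$ is a functor such that each $F(\sigma)$, $\sigma\in S$, lies in some block of $S'$. $(q\mathbf{ASmd})_0$ is the category of based quasi-schemoids: quasi-schemoids together with a subset $\mathcal C^\circ\subseteq ob(\mathcal C)$ of base points, with morphisms the morphisms of quasi-schemoids $F$ with $F(\mathcal C^\circ)\subseteq\mathcal E^\circ$. $\mathbf{Gpd}$ is the category of groupoids and functors. For a groupoid $\mathcal H$, $\widetilde S(\mathcal H)$ is the quasi-schemoid with underlying category $\widetilde{\mathcal H}$: $ob(\widetilde{\mathcal H})=mor(\mathcal H)$, $\mathrm{Hom}_{\widetilde{\mathcal H}}(g,h)=\{(h,g)\}$ if $t(h)=t(g)$ and empty otherwise, composition $(k,h)\circ(h,g)=(k,g)$; partition $\{\mathcal G_f\}_{f\in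 mor(\mathcal H)}$ with $\mathcal G_f=\{(k,l):k^{-1}l=f\}$; base points $\{1_x: x\in ob(\mathcal H)\}$. For a functor $F$, $\widetilde S(F)(f)=F(f)$, $\widetilde S(F)(f,g)=(F(f),F(g))$. *)

theory Defs
  imports Main "HOL-Library.FuncSet" "HOL-Library.Equipollence"
begin

record ('o, 'm) cat =
  Obj  :: "'o set"
  Mor  :: "'m set"
  Dom  :: "'m \<Rightarrow> 'o"
  Cod  :: "'m \<Rightarrow> 'o"
  Idm  :: "'o \<Rightarrow> 'm"
  Comp :: "'m \<Rightarrow> 'm \<Rightarrow> 'm"   (* Comp C g f = g o f, defined when Dom g = Cod f *)

definition category :: "('o, 'm) cat \<Rightarrow> bool" where
  "category C \<longleftrightarrow>
     (\<forall>f\<in>Mor C. Dom C f \<in> Obj C \<and> Cod C f \<in> Obj C) \<and>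
     (\<forall>x\<in>Obj C. Idm C x \<in> Mor C \<and> Dom C (Idm C x) = x \<and> Cod C (Idm C x) = x) \<and>
     (\<forall>f\<in>Mor C. \<forall>g\<in>Mor C. Dom C g = Cod C f \<longrightarrow>
        Comp C g f \<in> Mor C \<and> Dom C (Comp C g f) = Dom C f \<and> Cod C (Comp C g f) = Cod C g) \<and>
     (\<forall>f\<in>Mor C. Comp C (Idm C (Cod C f)) f = f \<and> Comp C f (Idm C (Dom C f)) = f) \<and>
     (\<forall>f\<in>Mor C. \<forall>g\<in>Mor C. \<forall>h\<in>Mor C. Dom C g = Cod C f \<longrightarrow> Dom C h = Cod C g \<longrightarrow>
        Comp C h (Comp C g f) = Comp C (Comp C h g) f)"

definition groupoid :: "('o, 'm) cat \<Rightarrow> bool" where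
  "groupoid C \<longleftrightarrow> category C \<and>
     (\<forall>f\<in>Mor C. \<exists>g\<in>Mor C. Dom C g = Cod C f \<and> Cod C g = Dom C f \<and>
        Comp C g f = Idm C (Dom C f) \<and> Comp C f g = Idm C (Cod C f))"

definition Inv :: "('o, 'm) cat \<Rightarrow> 'm \<Rightarrow> 'm" where
  "Inv C f = (SOME g. g \<in> Mor C \<and> Dom C g = Cod C f \<and> Cod C g = Dom C f \<and>
        Comp C g f = Idm C (Dom C f) \<and> Comp C f g = Idm C (Cod C f))"

text \<open>A functor is a pair (object map, morphism map), both extensional
  (undefined outside the carriers), so that the set of functors is a set.\<close>

definition is_functor ::
  "('o1, 'm1) cat \<Rightarrow> ('o2, 'm2) cat \<Rightarrow> ('o1 \<Rightarrow> 'o2) \<times> ('m1 \<Rightarrow> 'm2) \<Rightarrow> bool" where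
  "is_functor C D F \<longleftrightarrow>
     (case F of (Fo, Fm) \<Rightarrow>
       Fo \<in> extensional (Obj C) \<and> Fm \<in> extensional (Mor C) \<and>
       Fo \<in> Obj C \<rightarrow> Obj D \<and> Fm \<in> Mor C \<rightarrow> Mor D \<and>
       (\<forall>f\<in>Mor C. Dom D (Fm f) = Fo (Dom C f) \<and> Cod D (Fm f) = Fo (Cod C f)) \<and>
       (\<forall>x\<in>Obj C. Fm (Idm C x) = Idm D (Fo x)) \<and>
       (\<forall>f\<in>Mor C. \<forall>g\<in>Mor C. Dom C g = Cod C f \<longrightarrow>
          Fm (Comp C g f) = Comp D (Fm g) (Fm f)))"

text \<open>A based quasi-schemoid: (category, partition of the morphisms, base points).\<close>

type_synonym ('o, 'm) bqs = "('o, 'm) cat \<times> 'm set set \<times> 'o set"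

definition is_partition :: "'m set \<Rightarrow> 'm set set \<Rightarrow> bool" where
  "is_partition M S \<longleftrightarrow> \<Union>S = M \<and> {} \<notin> S \<and>
     (\<forall>A\<in>S. \<forall>B\<in>S. A \<noteq> B \<longrightarrow> A \<inter> B = {})"

definition quasi_schemoid :: "('o, 'm) cat \<Rightarrow> 'm set set \<Rightarrow> bool" where
  "quasi_schemoid C S \<longleftrightarrow> category C \<and> is_partition (Mor C) S \<and>
     (\<forall>\<sigma>\<in>S. \<forall>\<tau>\<in>S. \<forall>\<mu>\<in>S. \<forall>f\<in>\<mu>. \<forall>g\<in>\<mu>.
        {(a, b) \<in> \<sigma> \<times> \<tau>. Dom C a = Cod C b \<and> Comp C a b = f} \<approx>
        {(a, b) \<in> \<sigma> \<times> \<tau>. Dom C a = Cod C b \<and> Comp C a b = g})"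

definition qs_morphism ::
  "('o1, 'm1) cat \<Rightarrow> 'm1 set set \<Rightarrow> ('o2, 'm2) cat \<Rightarrow> 'm2 set set \<Rightarrow>
   ('o1 \<Rightarrow> 'o2) \<times> ('m1 \<Rightarrow> 'm2) \<Rightarrow> bool" where
  "qs_morphism C S D S' F \<longleftrightarrow> is_functor C D F \<and>
     (\<forall>\<sigma>\<in>S. \<exists>\<sigma>'\<in>S'. snd F ` \<sigma> \<subseteq> \<sigma>')"

definition based_qs_morphism ::
  "('o1, 'm1) bqs \<Rightarrow> ('o2, 'm2) bqs \<Rightarrow> ('o1 \<Rightarrow> 'o2) \<times> ('m1 \<Rightarrow> 'm2) \<Rightarrow> bool" where
  "based_qs_morphism X Y F \<longleftrightarrow>
     (case X of (C, S, B) \<Rightarrow> case Y of (D, S', B') \<Rightarrow>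
        qs_morphism C S D S' F \<and> fst F ` B \<subseteq> B')"

definition Htilde :: "('o, 'm) cat \<Rightarrow> ('m, 'm \<times> 'm) cat" where
  "Htilde H = \<lparr> Obj = Mor H,
               Mor = {(h, g). h \<in> Mor H \<and> g \<in> Mor H \<and> Cod H h = Cod H g},
               Dom = snd, Cod = fst,
               Idm = (\<lambda>g. (g, g)),
               Comp = (\<lambda>(k, h') (h, g). (k, g)) \<rparr>"

definition Gblock :: "('o, 'm) cat \<Rightarrow> 'm \<Rightarrow> ('m \<times> 'm) set" where
  "Gblock H f = {(k, l) \<in> Mor (Htilde H). Comp H (Inv H k) l = f}"

definition Stilde :: "('o, 'm) cat \<Rightarrow> ('m, 'm \<times> 'm) bqs" where
  "Stilde H = (Htilde H, Gblock H ` Mor H, Idm H ` Obj H)"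

definition Stilde_fun ::
  "('o1, 'm1) cat \<Rightarrow> ('o1 \<Rightarrow> 'o2) \<times> ('m1 \<Rightarrow> 'm2) \<Rightarrow>
   ('m1 \<Rightarrow> 'm2) \<times> ('m1 \<times> 'm1 \<Rightarrow> 'm2 \<times> 'm2)" where
  "Stilde_fun K F = (restrict (snd F) (Mor K),
                     restrict (\<lambda>(f, g). (snd F f, snd F g)) (Mor (Htilde K)))"

end

theory Submission
  imports Defs
begin

text \<open>A functor F induces the morphism (k, l) \<mapsto> (F k, F l) of the \<open>S\<close>-tilde quasi-schemoids,
  which maps the block of k\<inverse>l into the block of F(k)\<inverse>F(l) = F(k\<inverse>l). Conversely, for a based
  morphism G the functor axioms for \<open>Htilde\<close> force G(h, g) = (G h, G g) on pairs, block
  preservation gives G(k\<inverse>l) = G(k)\<inverse>G(l) (the block of (1, f) pins down the target block as that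
  of G f, because G maps identities to identities), and this quotient law implies that G
  preserves inverses and composition. The object part is recovered from the images of the
  identities, so the two constructions are mutually inverse.\<close>

lemma Htilde_simps [simp]:
  "Obj (Htilde H) = Mor H"
  "Mor (Htilde H) = {(h, g). h \<in> Mor H \<and> g \<in> Mor H \<and> Cod H h = Cod H g}"
  "Dom (Htilde H) = snd" "Cod (Htilde H) = fst" "Idm (Htilde H) = (\<lambda>g. (g, g))"
  "Comp (Htilde H) = (\<lambda>(k, h') (h, g). (k, g))"
  by (simp_all add: Htilde_def)

context
  fixes C :: "('o, 'm) cat"
  assumes C: "category C"
begin

lemma category_Dom_in_Obj: "f \<in> Mor C \<Longrightarrow> Dom C f \<in> Obj C"
  and category_Cod_in_Obj: "f \<in> Mor C \<Longrightarrow> Cod C f \<in> Obj C"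
  using C by (simp_all add: category_def)

lemma category_Idm_in_Mor: "x \<in> Obj C \<Longrightarrow> Idm C x \<in> Mor C"
  and category_Dom_Idm: "x \<in> Obj C \<Longrightarrow> Dom C (Idm C x) = x"
  and category_Cod_Idm: "x \<in> Obj C \<Longrightarrow> Cod C (Idm C x) = x"
  using C by (simp_all add: category_def)

lemma category_Comp_in_Mor:
  "\<lbrakk>f \<in> Mor C; g \<in> Mor C; Dom C g = Cod C f\<rbrakk> \<Longrightarrow> Comp C g f \<in> Mor C"
  using C by (simp add: category_def)

lemma category_Idm_left: "f \<in> Mor C \<Longrightarrow> Comp C (Idm C (Cod C f)) f = f"
  and category_Idm_right: "f \<in> Mor C \<Longrightarrow> Comp C f (Idm C (Dom C f)) = f"
  using C by (simp_all add: category_def)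

lemma category_Comp_assoc:
  "\<lbrakk>f \<in> Mor C; g \<in> Mor C; h \<in> Mor C; Dom C g = Cod C f; Dom C h = Cod C g\<rbrakk>
   \<Longrightarrow> Comp C h (Comp C g f) = Comp C (Comp C h g) f"
  using C by (simp add: category_def)

end

lemmas category_simps =
  category_Dom_in_Obj category_Cod_in_Obj category_Idm_in_Mor category_Dom_Idm
  category_Cod_Idm category_Comp_in_Mor category_Idm_left category_Idm_right

lemma groupoid_category: "groupoid C \<Longrightarrow> category C"
  by (simp add: groupoid_def)

context
  fixes C :: "('o, 'm) cat"
  assumes G: "groupoid C"
begin

private lemma Inv_props:
  "f \<in> Mor C \<Longrightarrow> Inv C f \<in> Mor C \<and> Dom C (Inv C f) = Cod C f \<and> Cod C (Inv C f) = Dom C f \<and>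
     Comp C (Inv C f) f = Idm C (Dom C f) \<and> Comp C f (Inv C f) = Idm C (Cod C f)"
  unfolding Inv_def by (rule someI_ex) (use G in \<open>auto simp: groupoid_def\<close>)

lemma Inv_in_Mor: "f \<in> Mor C \<Longrightarrow> Inv C f \<in> Mor C"
  and Dom_Inv: "f \<in> Mor C \<Longrightarrow> Dom C (Inv C f) = Cod C f"
  and Cod_Inv: "f \<in> Mor C \<Longrightarrow> Cod C (Inv C f) = Dom C f"
  and Comp_Inv_left: "f \<in> Mor C \<Longrightarrow> Comp C (Inv C f) f = Idm C (Dom C f)"
  and Comp_Inv_right: "f \<in> Mor C \<Longrightarrow> Comp C f (Inv C f) = Idm C (Cod C f)"
  using Inv_props by simp_all

lemma Inv_unique:
  assumes f: "f \<in> Mor C" and g: "g \<in> Mor C" and gf_comp: "Dom C g = Cod C f"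
    and gf: "Comp C g f = Idm C (Dom C f)"
  shows "Inv C f = g"
proof -
  note C = groupoid_category[OF G]
  have "g = Comp C g (Idm C (Dom C g))"
    using g C by (simp add: category_Idm_right)
  also have "\<dots> = Comp C g (Comp C f (Inv C f))"
    using f gf_comp by (simp add: Comp_Inv_right)
  also have "\<dots> = Comp C (Comp C g f) (Inv C f)"
    using f g gf_comp by (intro category_Comp_assoc[OF C]) (simp_all add: Inv_in_Mor Dom_Inv Cod_Inv)
  also have "\<dots> = Inv C f"
    using gf f C by (metis Cod_Inv Inv_in_Mor category_Idm_left)
  finally show ?thesis by simp
qed

lemma Inv_Idm: "x \<in> Obj C \<Longrightarrow> Inv C (Idm C x) = Idm C x"
  using groupoid_category[OF G] category_Idm_left[of C "Idm C x"]
  by (intro Inv_unique) (simp_all add: category_simps)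

lemma Inv_Inv: "f \<in> Mor C \<Longrightarrow> Inv C (Inv C f) = f"
  by (intro Inv_unique) (simp_all add: Inv_in_Mor Dom_Inv Cod_Inv Comp_Inv_right)

end

lemmas groupoid_simps = Inv_in_Mor Dom_Inv Cod_Inv Comp_Inv_left Comp_Inv_right

lemma is_functorD:
  assumes "is_functor C D (Fo, Fm)"
  shows "Fo \<in> extensional (Obj C)" "Fm \<in> extensional (Mor C)"
    "x \<in> Obj C \<Longrightarrow> Fo x \<in> Obj D" "f \<in> Mor C \<Longrightarrow> Fm f \<in> Mor D"
    "f \<in> Mor C \<Longrightarrow> Dom D (Fm f) = Fo (Dom C f)" "f \<in> Mor C \<Longrightarrow> Cod D (Fm f) = Fo (Cod C f)"
    "x \<in> Obj C \<Longrightarrow> Fm (Idm C x) = Idm D (Fo x)"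
    "\<lbrakk>f \<in> Mor C; g \<in> Mor C; Dom C g = Cod C f\<rbrakk> \<Longrightarrow> Fm (Comp C g f) = Comp D (Fm g) (Fm f)"
  using assms by (auto simp: is_functor_def)

lemma functor_Inv:
  assumes K: "groupoid K" and H: "groupoid H" and F: "is_functor K H (Fo, Fm)"
    and f: "f \<in> Mor K"
  shows "Fm (Inv K f) = Inv H (Fm f)"
proof -
  note cK = groupoid_category[OF K]
  have "Comp H (Fm (Inv K f)) (Fm f) = Fm (Comp K (Inv K f) f)"
    using f K by (intro is_functorD(8)[OF F, symmetric]) (simp_all add: groupoid_simps)
  also have "\<dots> = Fm (Idm K (Dom K f))"
    using f K by (simp add: groupoid_simps)
  finally have "Comp H (Fm (Inv K f)) (Fm f) = Fm (Idm K (Dom K f))" .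
  then show ?thesis
    using f K cK by (intro Inv_unique[OF H, symmetric])
      (simp_all add: is_functorD[OF F] groupoid_simps category_simps)
qed

lemma functor_image_Gblock:
  assumes K: "groupoid K" and H: "groupoid H" and F: "is_functor K H (Fo, Fm)"
  shows "(\<lambda>(k, l). (Fm k, Fm l)) ` Gblock K f \<subseteq> Gblock H (Fm f)"
proof clarify
  fix k l assume "(k, l) \<in> Gblock K f"
  then have kl: "k \<in> Mor K" "l \<in> Mor K" "Cod K k = Cod K l" and f: "Comp K (Inv K k) l = f"
    by (auto simp: Gblock_def)
  have "Comp H (Inv H (Fm k)) (Fm l) = Fm f"
    unfolding f[symmetric] functor_Inv[OF K H F kl(1), symmetric]
    using kl K by (intro is_functorD(8)[OF F, symmetric]) (simp_all add: groupoid_simps)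
  with kl show "(Fm k, Fm l) \<in> Gblock H (Fm f)"
    by (simp add: Gblock_def is_functorD[OF F])
qed

lemma based_qs_morphism_Stilde_fun:
  assumes K: "groupoid K" and H: "groupoid H" and F: "is_functor K H F"
  shows "based_qs_morphism (Stilde K) (Stilde H) (Stilde_fun K F)"
proof -
  obtain Fo Fm where F_def: "F = (Fo, Fm)" by fastforce
  note F' = F[unfolded F_def]
  have "\<exists>\<sigma>'\<in>Gblock H ` Mor H.
      (\<lambda>p\<in>Mor (Htilde K). case p of (k, l) \<Rightarrow> (Fm k, Fm l)) ` Gblock K f \<subseteq> \<sigma>'"
    if "f \<in> Mor K" for f
  proof -
    have "Gblock K f \<subseteq> Mor (Htilde K)" by (auto simp: Gblock_def)
    then show ?thesis
      using functor_image_Gblock[OF K H F', of f] that is_functorD(4)[OF F']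
      by (auto simp: image_subset_iff)
  qed
  then show ?thesis
    using is_functorD[OF F'] groupoid_category[OF K]
    by (auto simp: based_qs_morphism_def Stilde_def qs_morphism_def Stilde_fun_def F_def
        is_functor_def category_simps)
qed

lemma Stilde_fun_inj_on:
  assumes K: "category K"
  shows "inj_on (Stilde_fun K) {F. is_functor K H F}"
proof (rule inj_onI, clarify)
  fix Fo Fm Fo' Fm'
  assume F: "is_functor K H (Fo, Fm)" and F': "is_functor K H (Fo', Fm')"
    and eq: "Stilde_fun K (Fo, Fm) = Stilde_fun K (Fo', Fm')"
  have Fm: "Fm = Fm'"
    using eq is_functorD(2)[OF F] is_functorD(2)[OF F']
    by (metis Stilde_fun_def extensional_restrict fst_conv snd_conv)
  have "Fo x = Fo' x" if "x \<in> Obj K" for x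
    using is_functorD(5)[OF F] is_functorD(5)[OF F'] that K Fm
    by (metis category_Dom_Idm category_Idm_in_Mor)
  then have "Fo = Fo'"
    by (intro extensionalityI[OF is_functorD(1)[OF F] is_functorD(1)[OF F']])
  with Fm show "Fo = Fo' \<and> Fm = Fm'" by simp
qed

definition induced_obj_map :: "('o1, 'm1) cat \<Rightarrow> ('o2, 'm2) cat \<Rightarrow> ('m1 \<Rightarrow> 'm2) \<Rightarrow> 'o1 \<Rightarrow> 'o2" where
  "induced_obj_map K H G = (\<lambda>x\<in>Obj K. Dom H (G (Idm K x)))"

context
  fixes K :: "('o1, 'm1) cat" and H :: "('o2, 'm2) cat"
    and G0 :: "'m1 \<Rightarrow> 'm2" and G1 :: "'m1 \<times> 'm1 \<Rightarrow> 'm2 \<times> 'm2"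
  assumes K: "groupoid K" and H: "groupoid H"
    and G: "based_qs_morphism (Stilde K) (Stilde H) (G0, G1)"
begin

private lemma cK: "category K" and cH: "category H"
  using K H by (simp_all add: groupoid_category)

private lemma G_functor: "is_functor (Htilde K) (Htilde H) (G0, G1)"
  using G by (simp add: based_qs_morphism_def Stilde_def qs_morphism_def)

lemma based_morphism_extensional: "G0 \<in> extensional (Mor K)" "G1 \<in> extensional (Mor (Htilde K))"
  using is_functorD(1,2)[OF G_functor] by simp_all

lemma based_morphism_in_Mor: "f \<in> Mor K \<Longrightarrow> G0 f \<in> Mor H"
  using is_functorD(3)[OF G_functor] by simp

lemma based_morphism_pair:
  assumes "h \<in> Mor K" "g \<in> Mor K" "Cod K h = Cod K g"
  shows "G1 (h, g) = (G0 h, G0 g)" and "Cod H (G0 h) = Cod H (G0 g)"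
proof -
  have hg: "(h, g) \<in> Mor (Htilde K)" using assms by simp
  have "fst (G1 (h, g)) = G0 h" "snd (G1 (h, g)) = G0 g"
    using is_functorD(5,6)[OF G_functor hg] by simp_all
  moreover have "G1 (h, g) \<in> Mor (Htilde H)" using is_functorD(4)[OF G_functor hg] .
  ultimately show "G1 (h, g) = (G0 h, G0 g)" "Cod H (G0 h) = Cod H (G0 g)"
    by (auto simp: prod_eq_iff)
qed

lemma based_morphism_Idm:
  assumes "x \<in> Obj K"
  shows "G0 (Idm K x) = Idm H (induced_obj_map K H G0 x)" "induced_obj_map K H G0 x \<in> Obj H"
proof -
  obtain y where "y \<in> Obj H" "G0 (Idm K x) = Idm H y"
    using G assms by (auto simp: based_qs_morphism_def Stilde_def)
  then show "G0 (Idm K x) = Idm H (induced_obj_map K H G0 x)" "induced_obj_map K H G0 x \<in> Obj H"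
    using assms cH by (simp_all add: induced_obj_map_def category_simps)
qed

lemma based_morphism_quotient:
  assumes kl: "k \<in> Mor K" "l \<in> Mor K" "Cod K k = Cod K l"
  shows "G0 (Comp K (Inv K k) l) = Comp H (Inv H (G0 k)) (G0 l)"
proof -
  define f where "f = Comp K (Inv K k) l"
  have f: "f \<in> Mor K"
    using kl K cK by (simp add: f_def groupoid_simps category_simps)
  obtain f' where "f' \<in> Mor H" and blocks: "G1 ` Gblock K f \<subseteq> Gblock H f'"
    using G f(1) by (auto simp: based_qs_morphism_def Stilde_def qs_morphism_def)
  let ?x = "Cod K f"
  have x: "?x \<in> Obj K" using cK f by (rule category_Cod_in_Obj)
  have "(Idm K ?x, f) \<in> Gblock K f"
    using f x cK by (simp add: Gblock_def Inv_Idm[OF K] category_simps)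
  then have "(Idm H (induced_obj_map K H G0 ?x), G0 f) \<in> Gblock H f'"
    using blocks x f cK by (force simp: based_morphism_pair based_morphism_Idm category_simps)
  then have "f' = G0 f"
    using based_morphism_Idm[OF x] based_morphism_in_Mor[OF f(1)] H cH
    by (auto simp: Gblock_def Inv_Idm category_simps)
  moreover have "(k, l) \<in> Gblock K f" using kl by (simp add: Gblock_def f_def)
  ultimately show ?thesis
    using blocks kl by (force simp: Gblock_def based_morphism_pair f_def)
qed

lemma based_morphism_Dom: "f \<in> Mor K \<Longrightarrow> Dom H (G0 f) = induced_obj_map K H G0 (Dom K f)"
  using based_morphism_quotient[of f f] based_morphism_Idm[of "Dom K f"]
    based_morphism_in_Mor[of f] K H cK cH
  by (metis Comp_Inv_left category_Dom_Idm category_Dom_in_Obj category_Idm_in_Mor)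

lemma based_morphism_Cod: "f \<in> Mor K \<Longrightarrow> Cod H (G0 f) = induced_obj_map K H G0 (Cod K f)"
  using based_morphism_pair(2)[of "Idm K (Cod K f)" f] based_morphism_Idm[of "Cod K f"] cK cH
  by (simp add: category_simps)

lemma based_morphism_Inv:
  assumes g: "g \<in> Mor K"
  shows "G0 (Inv K g) = Inv H (G0 g)"
proof -
  let ?x = "Cod K g"
  have x: "?x \<in> Obj K" using cK g by (rule category_Cod_in_Obj)
  have "G0 (Inv K g) = G0 (Comp K (Inv K g) (Idm K ?x))"
    using g K cK category_Idm_right[OF cK Inv_in_Mor[OF K g]] by (simp add: Dom_Inv)
  also have "\<dots> = Comp H (Inv H (G0 g)) (Idm H (Cod H (G0 g)))"
    using based_morphism_quotient[of g "Idm K ?x"] based_morphism_Idm[OF x]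
      based_morphism_Cod[OF g] g x cK by (simp add: category_simps)
  also have "\<dots> = Inv H (G0 g)"
    using category_Idm_right[OF cH Inv_in_Mor[OF H based_morphism_in_Mor[OF g]]]
    by (simp add: Dom_Inv[OF H based_morphism_in_Mor[OF g]])
  finally show ?thesis .
qed

lemma based_morphism_Comp:
  assumes "f \<in> Mor K" "g \<in> Mor K" "Dom K g = Cod K f"
  shows "G0 (Comp K g f) = Comp H (G0 g) (G0 f)"
  using based_morphism_quotient[of "Inv K g" f] based_morphism_Inv[of g] assms K H
  by (simp add: Inv_Inv groupoid_simps based_morphism_in_Mor)

lemma based_morphism_induced_functor: "is_functor K H (induced_obj_map K H G0, G0)"
  unfolding is_functor_def
  using based_morphism_extensional based_morphism_in_Mor based_morphism_Idm
    based_morphism_Dom based_morphism_Cod based_morphism_Comp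
  by (auto simp: induced_obj_map_def)

lemma based_morphism_eq_Stilde_fun: "(G0, G1) = Stilde_fun K (induced_obj_map K H G0, G0)"
proof -
  have "restrict (\<lambda>(f, g). (G0 f, G0 g)) (Mor (Htilde K)) = G1"
    by (rule extensionalityI[OF _ based_morphism_extensional(2)])
      (auto simp: based_morphism_pair)
  then show ?thesis
    by (simp add: Stilde_fun_def extensional_restrict based_morphism_extensional(1))
qed

end

theorem corollary3p5:
  fixes K :: "('o1, 'm1) cat" and H :: "('o2, 'm2) cat"
  assumes gK: "groupoid K" and gH: "groupoid H"
  shows "bij_betw (Stilde_fun K)
           {F. is_functor K H F}
           {G. based_qs_morphism (Stilde K) (Stilde H) G}"
proof (rule bij_betw_imageI)
  show "inj_on (Stilde_fun K) {F. is_functor K H F}"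
    using Stilde_fun_inj_on groupoid_category[OF gK] .
  show "Stilde_fun K ` {F. is_functor K H F} = {G. based_qs_morphism (Stilde K) (Stilde H) G}"
  proof (intro equalityI subsetI)
    fix G assume "G \<in> {G. based_qs_morphism (Stilde K) (Stilde H) G}"
    moreover obtain G0 G1 where "G = (G0, G1)" by fastforce
    ultimately show "G \<in> Stilde_fun K ` {F. is_functor K H F}"
      using based_morphism_eq_Stilde_fun[OF gK gH] based_morphism_induced_functor[OF gK gH]
      by blast
  qed (auto intro: based_qs_morphism_Stilde_fun[OF gK gH])
qed

end
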